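(* Let $M$ and $F \geq 2$ be positive integers, $N = MF$, and let $u_l(0),\dots,u_l(M-1)$ be real numbers. Consider the zero-order hold fast-rate input $u_h(mF + i) = u_l(m)$ for all $m\in\{0,\dots,M-1\}$ and $i \in \{0,\dots,F-1\}$, with $u_h(k) = 0$ for $k<0$. Let $P \in \{1,\dots,N\}$ with $P > 2$, and let $\Phi\in\mathbb{R}^{M\times P}$ be the regressor matrix with entries $\Phi_{m,i} = u_h(mF - i)$ for $m=0,\dots,M-1$, $i=0,\dots,P-1$. Then the fast-rate FIR model of order $P$ is not unique, i.e., there exist $\theta\neq\theta^*\in\mathbb{R}^P$ with $\Phi(\theta-\theta^* )=0$.
   Context: A fast-rate FIR model of order $P$ with parameters $\theta = [\theta_0,\dots,\theta_{P-1}]^\top$ produces the fast-rate output $\hat y_h(n) = \sum_{i=0}^{P-1}\theta_i u_h(n-i)$; downsampling by factor $F$ gives the slow-rate output $\hat y_l(m) = \hat y_h(mF)$, $m=0,\dots,M-1$, so that $\hat y_l = \Phi\theta$ with $\Phi$ as in the claim. The fast-rate model is called unique (given $u_h$) if $\Phi(\theta-\theta^* )=0$ implies $\theta = \theta^*$. *)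

theory Defs
  imports Complex_Main
begin

text \<open>Zero-order hold fast-rate input, defined on all integers: zero for negative
  times, the held slow-rate value on 0..N-1, and (irrelevantly) zero afterwards.\<close>
definition zoh_input :: "nat \<Rightarrow> nat \<Rightarrow> (nat \<Rightarrow> real) \<Rightarrow> int \<Rightarrow> real" where
  "zoh_input M F ul k = (if k < 0 \<or> k \<ge> int (M * F) then 0 else ul (nat k div F))"

definition regressor :: "nat \<Rightarrow> (int \<Rightarrow> real) \<Rightarrow> nat \<Rightarrow> nat \<Rightarrow> real" where
  "regressor F uh m i = uh (int (m * F) - int i)"

end

theory Submission
  imports Defs
begin

text \<open>Under zero-order hold, for \<open>1 \<le> i \<le> F\<close> the fast-rate sample \<open>u\<^sub>h(mF - i)\<close> lies in
  the hold interval of \<open>u\<^sub>l(m - 1)\<close> (or at a negative time if \<open>m = 0\<close>), so it does not depend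
  on \<open>i\<close>. Hence columns 1 to \<open>F\<close> of \<open>\<Phi>\<close> coincide, and when \<open>F \<ge> 2\<close> and \<open>P > 2\<close> the
  difference \<open>e\<^sub>1 - e\<^sub>2\<close> of two unit vectors lies in the kernel of \<open>\<Phi>\<close>.\<close>

lemma zoh_input_negative:
  assumes "k < 0"
  shows "zoh_input M F ul k = 0"
  using assms by (simp add: zoh_input_def)

lemma zoh_input_hold:
  assumes "j < F" and "k < M"
  shows "zoh_input M F ul (int (k * F + j)) = ul k"
proof -
  have "k * F + j < Suc k * F"
    using assms(1) by simp
  also have "\<dots> \<le> M * F"
    using assms(2) by (intro mult_le_mono1) simp
  finally have "k * F + j < M * F" .
  moreover have "(k * F + j) div F = k"
    using assms(1) by simp
  ultimately show ?thesis
    by (simp add: zoh_input_def del: of_nat_add of_nat_mult)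
qed

lemma regressor_zoh_input_column_eq:
  assumes "1 \<le> i" "i \<le> F" "1 \<le> i'" "i' \<le> F" and "m < M"
  shows "regressor F (zoh_input M F ul) m i = regressor F (zoh_input M F ul) m i'"
proof (cases m)
  case 0
  then show ?thesis
    using assms by (simp add: regressor_def zoh_input_negative)
next
  case (Suc k)
  have sample: "regressor F (zoh_input M F ul) m l = ul k" if "1 \<le> l" "l \<le> F" for l
  proof -
    have "int (m * F) - int l = int (k * F + (F - l))"
      using that Suc by (simp add: algebra_simps of_nat_diff)
    then have "regressor F (zoh_input M F ul) m l = zoh_input M F ul (int (k * F + (F - l)))"
      by (simp only: regressor_def)
    also have "\<dots> = ul k"
      using that Suc assms(5) by (intro zoh_input_hold) auto
    finally show ?thesis .
  qed
  show ?thesis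
    using assms by (simp add: sample)
qed

lemma equal_columns_kernel_vector:
  fixes \<Phi> :: "nat \<Rightarrow> nat \<Rightarrow> real"
  assumes "i < P" "j < P" and "\<Phi> m i = \<Phi> m j"
  shows "(\<Sum>k<P. \<Phi> m k * (of_bool (k = i) - of_bool (k = j))) = 0"
proof -
  have "(\<Sum>k<P. \<Phi> m k * (of_bool (k = i) - of_bool (k = j)))
      = (\<Sum>k<P. if k = i then \<Phi> m k else 0) - (\<Sum>k<P. if k = j then \<Phi> m k else 0)"
    by (simp add: right_diff_distrib sum_subtractf)
  also have "\<dots> = \<Phi> m i - \<Phi> m j"
    using assms by simp
  finally show ?thesis
    using assms(3) by simp
qed

theorem lemma2:
  fixes M F P :: nat and ul :: "nat \<Rightarrow> real"
  assumes "M \<ge> 1" and "F \<ge> 2" and "1 \<le> P" and "P \<le> M * F" and "P > 2"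
  shows "\<exists>\<theta> \<theta>s :: nat \<Rightarrow> real. (\<exists>i<P. \<theta> i \<noteq> \<theta>s i) \<and>
           (\<forall>m<M. (\<Sum>i<P. regressor F (zoh_input M F ul) m i * (\<theta> i - \<theta>s i)) = 0)"
proof -
  define \<theta> :: "nat \<Rightarrow> real" where "\<theta> k = of_bool (k = 1) - of_bool (k = 2)" for k
  have "\<exists>i<P. \<theta> i \<noteq> 0"
    using assms(5) by (intro exI[of _ 1]) (simp add: \<theta>_def)
  moreover have "(\<Sum>i<P. regressor F (zoh_input M F ul) m i * (\<theta> i - 0)) = 0" if "m < M" for m
    unfolding \<theta>_def diff_zero
    using assms(2,5) that
    by (intro equal_columns_kernel_vector regressor_zoh_input_column_eq) auto
  ultimately show ?thesis
    by (intro exI[of _ \<theta>] exI[of _ "\<lambda>_. 0"] conjI allI impI) simp_all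
qed

end
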